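(* On $\mathbb{R}^2$ with standard coordinates $(x,y)$, let $E_1:=x\frac{\partial}{\partial x}+\frac{\partial}{\partial y}$, $E_2:=-\frac{\partial}{\partial x}$, with dual coframe $E^1=dy$, $E^2=-dx+x\,dy$, and let $F\colon T\mathbb{R}^2\to\mathbb{R}$ be the Randers-type Finsler function $F=\sqrt{4(E^1)^2+12(E^2)^2}-E^1=\sqrt{4(dy)^2+12(-dx+x\,dy)^2}-dy$. Let $\nabla$ be the covariant derivative on $\mathbb{R}^2$ with $\nabla E_1=\nabla E_2=0$. Then: (i) $F$ is holonomy invariant with respect to $\nabla$, so $(\mathbb{R}^2,F)$ is a generalized Berwald manifold; (ii) $\nabla$ is the only covariant derivative on $\mathbb{R}^2$ with respect to which $F$ is holonomy invariant; (iii) the torsion of $\nabla$ satisfies $T^\nabla(E_1,E_2)=-\frac{\partial}{\partial x}\neq0$. Consequently no torsion-free covariant derivative makes $F$ holonomy invariant, i.e. $(\mathbb{R}^2,F)$ is not a Berwald manifold.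
   Context: A function $F$ on $TM$ is holonomy invariant with respect to a covariant derivative $\nabla$ if $F_{\gamma(t)}\circ P^t_\gamma=F_{\gamma(0)}$ for every regular smooth curve $\gamma\colon I\to M$ ($I$ an open interval containing $0$) and every $t\in I$, where $F_p$ is the restriction of $F$ to $T_pM$ and $P^t_\gamma$ is $\nabla$-parallel translation from $\gamma(0)$ to $\gamma(t)$. A Finsler manifold $(M,F)$ is a generalized Berwald manifold if $F$ is holonomy invariant with respect to some covariant derivative on $M$, and a Berwald manifold if this covariant derivative can be chosen torsion-free. The torsion is $T^\nabla(X,Y)=\nabla_XY-\nabla_YX-[X,Y]$. *)

theory Defs
  imports "HOL-Analysis.Analysis"
begin

(* Points of R^2 and tangent vectors are elements of real^2; coordinates x = p$1, y = p$2.
   A tangent vector v at p has components v$1, v$2 w.r.t. d/dx, d/dy. *)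

definition pd :: "('a::euclidean_space \<Rightarrow> 'b::real_normed_vector) \<Rightarrow> 'a \<Rightarrow> 'a \<Rightarrow> 'b" where
  "pd f i x = frechet_derivative f (at x) i"

definition smooth_on :: "'a::euclidean_space set \<Rightarrow> ('a \<Rightarrow> 'b::real_normed_vector) \<Rightarrow> bool" where
  "smooth_on S f \<longleftrightarrow> (\<forall>is \<in> lists Basis. (fold (\<lambda>i g. pd g i) is f) differentiable_on S)"

(* A covariant derivative on R^2 is given by its Christoffel symbols w.r.t. the coordinate frame:
   nabla_{d_i} d_j = sum_k Gam k i j d_k, with smooth Gam. *)
type_synonym christoffel = "2 \<Rightarrow> 2 \<Rightarrow> 2 \<Rightarrow> real^2 \<Rightarrow> real"

definition is_covD :: "christoffel \<Rightarrow> bool" where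
  "is_covD Gam \<longleftrightarrow> (\<forall>k i j. smooth_on UNIV (Gam k i j))"

definition covD :: "christoffel \<Rightarrow> (real^2 \<Rightarrow> real^2) \<Rightarrow> (real^2 \<Rightarrow> real^2) \<Rightarrow> real^2 \<Rightarrow> real^2" where
  "covD Gam X Y p = (\<chi> k. (\<Sum>i\<in>UNIV. X p $ i * pd (\<lambda>q. Y q $ k) (axis i 1) p)
      + (\<Sum>i\<in>UNIV. \<Sum>j\<in>UNIV. Gam k i j p * X p $ i * Y p $ j))"

definition lie_bracket :: "(real^2 \<Rightarrow> real^2) \<Rightarrow> (real^2 \<Rightarrow> real^2) \<Rightarrow> real^2 \<Rightarrow> real^2" where
  "lie_bracket X Y p = (\<chi> k. \<Sum>i\<in>UNIV. X p $ i * pd (\<lambda>q. Y q $ k) (axis i 1) p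
                                       - Y p $ i * pd (\<lambda>q. X q $ k) (axis i 1) p)"

definition torsion :: "christoffel \<Rightarrow> (real^2 \<Rightarrow> real^2) \<Rightarrow> (real^2 \<Rightarrow> real^2) \<Rightarrow> real^2 \<Rightarrow> real^2" where
  "torsion Gam X Y p = covD Gam X Y p - covD Gam Y X p - lie_bracket X Y p"

definition torsion_free :: "christoffel \<Rightarrow> bool" where
  "torsion_free Gam \<longleftrightarrow> (\<forall>X Y. smooth_on UNIV X \<and> smooth_on UNIV Y \<longrightarrow> torsion Gam X Y = (\<lambda>p. 0))"

definition regular_smooth_curve :: "real set \<Rightarrow> (real \<Rightarrow> real^2) \<Rightarrow> bool" where
  "regular_smooth_curve I \<gamma> \<longleftrightarrow> smooth_on I \<gamma> \<and> (\<forall>t\<in>I. vector_derivative \<gamma> (at t) \<noteq> 0)"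

definition parallel_along :: "christoffel \<Rightarrow> real set \<Rightarrow> (real \<Rightarrow> real^2) \<Rightarrow> (real \<Rightarrow> real^2) \<Rightarrow> bool" where
  "parallel_along Gam I \<gamma> V \<longleftrightarrow> (\<forall>t\<in>I. (V has_vector_derivative
      (\<chi> k. - (\<Sum>i\<in>UNIV. \<Sum>j\<in>UNIV. Gam k i j (\<gamma> t) * vector_derivative \<gamma> (at t) $ i * V t $ j))) (at t))"

(* F_{gamma(t)} o P^t_gamma = F_{gamma(0)}: the value of F is constant along every parallel field
   along every regular smooth curve defined on an open interval containing 0 *)
definition holonomy_invariant :: "christoffel \<Rightarrow> (real^2 \<Rightarrow> real^2 \<Rightarrow> real) \<Rightarrow> bool" where
  "holonomy_invariant Gam F \<longleftrightarrow>
     (\<forall>a b \<gamma> V t. a < 0 \<and> 0 < b \<and> regular_smooth_curve {a<..<b} \<gamma>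
        \<and> parallel_along Gam {a<..<b} \<gamma> V \<and> t \<in> {a<..<b}
        \<longrightarrow> F (\<gamma> t) (V t) = F (\<gamma> 0) (V 0))"

definition generalized_Berwald :: "(real^2 \<Rightarrow> real^2 \<Rightarrow> real) \<Rightarrow> bool" where
  "generalized_Berwald F \<longleftrightarrow> (\<exists>Gam. is_covD Gam \<and> holonomy_invariant Gam F)"

definition Berwald :: "(real^2 \<Rightarrow> real^2 \<Rightarrow> real) \<Rightarrow> bool" where
  "Berwald F \<longleftrightarrow> (\<exists>Gam. is_covD Gam \<and> torsion_free Gam \<and> holonomy_invariant Gam F)"

definition E1 :: "real^2 \<Rightarrow> real^2" where "E1 p = vector [p $ 1, 1]"
definition E2 :: "real^2 \<Rightarrow> real^2" where "E2 p = vector [-1, 0]"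

definition Fex :: "real^2 \<Rightarrow> real^2 \<Rightarrow> real" where
  "Fex p v = sqrt (4 * (v $ 2)^2 + 12 * (- (v $ 1) + p $ 1 * v $ 2)^2) - v $ 2"

end

theory Submission
  imports Defs
begin

(* Existence: F is a function of the coframe values E^1(v), E^2(v), and these are constant along
   parallel fields of the frame connection.  Uniqueness: for any covariant derivative making F
   holonomy invariant, parallel transport along straight lines exists for a short time (a linear
   ODE, solved by Picard iteration with the Banach fixed point theorem), so the derivative of F
   along it vanishes at time 0.  This first variation equation, written for v and for -v, uses
   that F is not reversible and pins down every Christoffel symbol. *)

lemma pd_affine:
  assumes "\<And>x. f x = c + L x" "linear L"
  shows "pd f i x = L i"
proof -
  have "(f has_derivative L) (at x)"
    unfolding assms(1)[abs_def]
    by (auto intro!: derivative_eq_intros linear_imp_has_derivative[OF assms(2)])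
  then show ?thesis unfolding pd_def using frechet_derivative_at by metis
qed

lemma pd_const: "pd (\<lambda>_. c) i x = 0"
  using pd_affine[of "\<lambda>_. c" c "\<lambda>_. 0"] by (simp add: linear_zero)

(* Affine maps are smooth: their first derivatives are constant, so all higher ones vanish.
   This covers constant maps, straight lines and the frame field E1. *)
lemma smooth_on_affine:
  fixes f :: "'a::euclidean_space \<Rightarrow> 'b::real_normed_vector"
  assumes f: "\<And>x. f x = c + L x" and L: "linear L"
  shows "smooth_on S f"
  unfolding smooth_on_def
proof
  fix "is" :: "'a list"
  have const_derivs: "fold (\<lambda>i g. pd g i) is (\<lambda>_. b) = (\<lambda>_. if is = [] then b else 0)"
    for b :: 'b and "is" :: "'a list"
    by (induction "is" arbitrary: b) (simp_all add: pd_const[abs_def])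
  show "fold (\<lambda>i g. pd g i) is f differentiable_on S"
  proof (cases "is")
    case Nil
    have "f differentiable at x" for x
      unfolding f[abs_def] differentiable_def
      by (auto intro!: derivative_eq_intros linear_imp_has_derivative[OF L])
    then show ?thesis using Nil by (simp add: differentiable_at_imp_differentiable_on)
  next
    case (Cons i r)
    have "(\<lambda>x. pd f i x) = (\<lambda>_. L i)" using pd_affine[OF f L] by auto
    then show ?thesis using Cons const_derivs[of r] by simp
  qed
qed

lemma smooth_on_const: "smooth_on S (\<lambda>_. c)"
  by (rule smooth_on_affine[where L="\<lambda>_. 0"]) (simp_all add: linear_zero)

lemma smooth_on_imp_differentiable_on: "smooth_on S f \<Longrightarrow> f differentiable_on S"
  unfolding smooth_on_def by (metis fold_Nil id_apply lists.Nil)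

lemma has_vector_derivative_vec_nth:
  assumes "(f has_vector_derivative f') F"
  shows "((\<lambda>x. f x $ k) has_real_derivative f' $ k) F"
proof -
  have "((\<lambda>x. f x $ k) has_derivative (\<lambda>h. (h *\<^sub>R f') $ k)) F"
    using bounded_linear.has_derivative[OF bounded_linear_vec_nth assms[unfolded has_vector_derivative_def]] .
  moreover have "(\<lambda>h. (h *\<^sub>R f') $ k) = (*) (f' $ k)" by (auto simp: mult.commute)
  ultimately show ?thesis by (simp add: has_field_derivative_def)
qed

lemma has_field_derivative_zero_constant_interval:
  fixes g :: "real \<Rightarrow> real"
  assumes "\<And>s. s \<in> {a<..<b} \<Longrightarrow> (g has_real_derivative 0) (at s)" "s \<in> {a<..<b}" "t \<in> {a<..<b}"
  shows "g s = g t"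
proof -
  obtain c where "\<forall>x\<in>{a<..<b}. g x = c"
    using has_field_derivative_zero_constant[of "{a<..<b}" g] assms(1)
    by (auto intro: has_field_derivative_at_within)
  then show ?thesis using assms(2,3) by simp
qed

definition linear_field :: "('n::finite \<Rightarrow> 'n \<Rightarrow> real \<Rightarrow> real) \<Rightarrow> real \<Rightarrow> real^'n \<Rightarrow> real^'n" where
  "linear_field M t v = (\<chi> k. \<Sum>j\<in>UNIV. M k j t * v $ j)"

lemma linear_field_diff: "linear_field M t u - linear_field M t v = linear_field M t (u - v)"
  by (simp add: linear_field_def vec_eq_iff algebra_simps sum_subtractf[symmetric])

lemma norm_linear_field_le: "norm (linear_field M t v) \<le> (\<Sum>k\<in>UNIV. \<Sum>j\<in>UNIV. \<bar>M k j t\<bar>) * norm v"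
proof -
  have "norm (linear_field M t v) \<le> (\<Sum>k\<in>UNIV. \<bar>linear_field M t v $ k\<bar>)" by (rule norm_le_l1_cart)
  also have "\<dots> \<le> (\<Sum>k\<in>UNIV. \<Sum>j\<in>UNIV. \<bar>M k j t\<bar> * norm v)"
  proof (rule sum_mono)
    fix k
    have "\<bar>linear_field M t v $ k\<bar> \<le> (\<Sum>j\<in>UNIV. \<bar>M k j t * v $ j\<bar>)"
      unfolding linear_field_def by (simp add: sum_abs)
    also have "\<dots> \<le> (\<Sum>j\<in>UNIV. \<bar>M k j t\<bar> * norm v)"
      by (rule sum_mono) (simp add: abs_mult mult_left_mono component_le_norm_cart)
    finally show "\<bar>linear_field M t v $ k\<bar> \<le> (\<Sum>j\<in>UNIV. \<bar>M k j t\<bar> * norm v)" .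
  qed
  also have "\<dots> = (\<Sum>k\<in>UNIV. \<Sum>j\<in>UNIV. \<bar>M k j t\<bar>) * norm v" by (simp add: sum_distrib_right)
  finally show ?thesis .
qed

lemma linear_field_bounded:
  fixes M :: "'n::finite \<Rightarrow> 'n \<Rightarrow> real \<Rightarrow> real"
  assumes "\<And>k j. continuous_on S (M k j)" "compact S"
  obtains B where "0 \<le> B" "\<And>t v. t \<in> S \<Longrightarrow> norm (linear_field M t v) \<le> B * norm v"
proof -
  define N where "N t = (\<Sum>k\<in>UNIV. \<Sum>j\<in>UNIV. \<bar>M k j t\<bar>)" for t
  have "continuous_on S N" unfolding N_def by (intro continuous_intros assms(1))
  then have "bounded (N ` S)" using assms(2) by (intro compact_imp_bounded compact_continuous_image)
  then obtain B0 where B0: "\<And>t. t \<in> S \<Longrightarrow> norm (N t) \<le> B0" unfolding bounded_iff by blast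
  show ?thesis
  proof
    show "0 \<le> max B0 0" by simp
    fix t and v :: "real^'n" assume "t \<in> S"
    then have "N t \<le> max B0 0" using B0 by force
    then have "N t * norm v \<le> max B0 0 * norm v" by (simp add: mult_right_mono)
    then show "norm (linear_field M t v) \<le> max B0 0 * norm v"
      using norm_linear_field_le[of M t v] by (simp add: N_def)
  qed
qed

lemma continuous_on_linear_field:
  assumes "\<And>k j. continuous_on S (M k j)" "continuous_on S f"
  shows "continuous_on S (\<lambda>s. linear_field M s (f s))"
  unfolding linear_field_def by (intro continuous_intros assms)

lemma integral_equation_imp_has_vector_derivative:
  fixes g :: "real \<Rightarrow> 'a::banach"
  assumes g: "continuous_on {a..b} g" and V: "\<And>s. s \<in> {a..b} \<Longrightarrow> V s = c + integral {a..s} g"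
    and t: "t \<in> {a<..<b}"
  shows "(V has_vector_derivative g t) (at t)"
proof -
  have "((\<lambda>s. integral {a..s} g) has_vector_derivative g t) (at t within {a..b})"
    using integral_has_vector_derivative[OF g] t by auto
  then have "((\<lambda>s. integral {a..s} g) has_vector_derivative g t) (at t)"
    using at_within_interior[of t "{a..b}"] t by (simp add: interior_atLeastAtMost_real)
  then have "((\<lambda>s. c + integral {a..s} g) has_vector_derivative g t) (at t)"
    using has_vector_derivative_add[OF has_vector_derivative_const] by fastforce
  then show ?thesis
    by (rule has_vector_derivative_transform_within_open[where S="{a<..<b}"]) (use t V in auto)
qed

definition picard_step ::
    "('n::finite \<Rightarrow> 'n \<Rightarrow> real \<Rightarrow> real) \<Rightarrow> real \<Rightarrow> real^'n \<Rightarrow> (real \<Rightarrow> real^'n) \<Rightarrow> real \<Rightarrow> real^'n" where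
  "picard_step M h v0 f t = v0 + integral {-h..t} (\<lambda>s. linear_field M s (f s))
                                - integral {-h..0} (\<lambda>s. linear_field M s (f s))"

lemma picard_step_lipschitz:
  assumes M: "\<And>k j. continuous_on {-h..h} (M k j)"
    and B: "0 \<le> B" "\<And>s v. s \<in> {-h..h} \<Longrightarrow> norm (linear_field M s v) \<le> B * norm v"
    and fg: "continuous_on {-h..h} f" "continuous_on {-h..h} g"
    and d: "\<And>s. s \<in> {-h..h} \<Longrightarrow> norm (f s - g s) \<le> d"
    and t: "t \<in> {-h..h}"
  shows "norm (picard_step M h v0 f t - picard_step M h v0 g t) \<le> 4 * h * B * d"
proof -
  define D where "D s = linear_field M s (f s - g s)" for s
  have h: "0 \<le> h" and d0: "0 \<le> d" using t d[of t] by (auto intro: order_trans[OF norm_ge_zero])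
  have cD: "continuous_on {-h..h} D" unfolding D_def
    by (intro continuous_on_linear_field M continuous_intros fg)
  have Db: "norm (D s) \<le> B * d" if "s \<in> {-h..h}" for s
    using B(2)[OF that, of "f s - g s"] d[OF that] mult_left_mono[OF d[OF that] B(1)]
    unfolding D_def by linarith
  have bound: "norm (integral {-h..u} D) \<le> B * d * (2 * h)" if "u \<in> {-h..h}" for u
  proof -
    have "norm (integral {-h..u} D) \<le> B * d * (u - -h)"
      by (rule integral_bound) (use that Db in \<open>auto intro: continuous_on_subset[OF cD]\<close>)
    also have "\<dots> \<le> B * d * (2 * h)"
      using that B(1) d0 by (intro mult_left_mono) auto
    finally show ?thesis .
  qed
  have int: "(\<lambda>s. linear_field M s (k s)) integrable_on {-h..u}"
    if "continuous_on {-h..h} k" "u \<le> h" for k u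
    by (rule integrable_continuous_real, rule continuous_on_subset[OF continuous_on_linear_field[OF M that(1)]])
       (use that in auto)
  have "picard_step M h v0 f t - picard_step M h v0 g t = integral {-h..t} D - integral {-h..0} D"
    unfolding picard_step_def D_def
    using integral_diff[OF int[OF fg(1)] int[OF fg(2)], of t] integral_diff[OF int[OF fg(1)] int[OF fg(2)], of 0] t h
    by (simp add: linear_field_diff algebra_simps)
  also have "norm \<dots> \<le> norm (integral {-h..t} D) + norm (integral {-h..0} D)" by (rule norm_triangle_ineq4)
  also have "\<dots> \<le> B * d * (2 * h) + B * d * (2 * h)" using bound t h by (intro add_mono) auto
  finally show ?thesis by (simp add: algebra_simps)
qed

(* An operator producing functions continuous on [a,b] induces, by constant extension outside
   [a,b], a self-map of the complete space of bounded continuous functions. *)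
lemma bcontfun_clamped_operator:
  fixes P :: "(real \<Rightarrow> 'b::metric_space) \<Rightarrow> real \<Rightarrow> 'b"
  assumes "\<And>f :: (real, 'b) bcontfun. continuous_on {a..b} (P f)"
  obtains \<Phi> :: "(real, 'b) bcontfun \<Rightarrow> (real, 'b) bcontfun" where "\<And>f x. \<Phi> f x = P f (clamp a b x)"
proof -
  have "\<forall>f :: (real, 'b) bcontfun. \<exists>g :: (real, 'b) bcontfun. \<forall>x. g x = P f (clamp a b x)"
  proof
    fix f :: "(real, 'b) bcontfun"
    have "continuous_on (cbox a b) (P f)" using assms by (simp add: cbox_interval)
    from continuous_on_cbox_bcontfunE[OF this] show "\<exists>g :: (real, 'b) bcontfun. \<forall>x. g x = P f (clamp a b x)"
      by metis
  qed
  then show ?thesis using that by metis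
qed

(* Local existence for linear ODEs with continuous coefficients: for h small the Picard
   step is a contraction on bounded continuous functions, and its fixed point is a solution. *)
lemma linear_ode_local_existence:
  fixes M :: "'n::finite \<Rightarrow> 'n \<Rightarrow> real \<Rightarrow> real" and v0 :: "real^'n"
  assumes M: "\<And>k j. continuous_on UNIV (M k j)"
  shows "\<exists>h>0. \<exists>V. V 0 = v0 \<and> (\<forall>t\<in>{-h<..<h}. (V has_vector_derivative linear_field M t (V t)) (at t))"
proof -
  obtain B where B: "0 \<le> B" "\<And>t v. t \<in> {-1..1} \<Longrightarrow> norm (linear_field M t v) \<le> B * norm v"
    using linear_field_bounded[of "{-1..1}" M] M continuous_on_subset by blast
  define h :: real where "h = 1 / (4 * (B + 1))"
  have h: "0 < h" "h \<le> 1" "4 * h * B < 1" using B(1) by (simp_all add: h_def field_simps)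
  have M_h: "continuous_on {-h..h} (M k j)" for k j using M continuous_on_subset by blast
  have B_h: "norm (linear_field M t v) \<le> B * norm v" if "t \<in> {-h..h}" for t v
    using B(2) that h(2) by auto
  have step_cont: "continuous_on {-h..h} (picard_step M h v0 f)" if "continuous_on {-h..h} f" for f
  proof -
    have "continuous_on {-h..h} (\<lambda>t. integral {-h..t} (\<lambda>s. linear_field M s (f s)))"
      by (intro indefinite_integral_continuous_1 integrable_continuous_real
          continuous_on_linear_field M_h that)
    then show ?thesis unfolding picard_step_def by (auto intro!: continuous_intros)
  qed
  obtain \<Phi> :: "(real, real^'n) bcontfun \<Rightarrow> (real, real^'n) bcontfun"
    where \<Phi>: "\<And>f x. \<Phi> f x = picard_step M h v0 f (clamp (-h) h x)"
    using bcontfun_clamped_operator[of "-h" h "picard_step M h v0"] step_cont continuous_on_apply_bcontfun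
    by blast
  have clamp_in: "clamp (-h) h x \<in> {-h..h}" for x
    using clamp_in_interval[of "-h" h x] h(1) by (simp add: cbox_interval)
  have "dist (\<Phi> f) (\<Phi> g) \<le> (4 * h * B) * dist f g" for f g
  proof (rule dist_bound)
    fix x
    show "dist (\<Phi> f x) (\<Phi> g x) \<le> 4 * h * B * dist f g"
      unfolding \<Phi> dist_norm
      by (rule picard_step_lipschitz[OF M_h B(1) B_h _ _ _ clamp_in])
         (use dist_bounded[of f _ g] in \<open>simp_all add: continuous_on_apply_bcontfun dist_norm\<close>)
  qed
  then obtain F where F: "\<Phi> F = F"
    using banach_fix_type[of "4 * h * B" \<Phi>] h B(1) by auto
  have fixpoint: "F t = picard_step M h v0 F t" if "t \<in> {-h..h}" for t
    using \<Phi>[of F t] F that clamp_cancel_cbox[of t "-h" h] by (simp add: cbox_interval)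
  have "(F has_vector_derivative linear_field M t (F t)) (at t)" if "t \<in> {-h<..<h}" for t
    by (rule integral_equation_imp_has_vector_derivative[OF continuous_on_linear_field[OF M_h]])
       (use fixpoint that in \<open>auto simp: picard_step_def intro: continuous_on_apply_bcontfun\<close>)
  moreover have "F 0 = v0" using fixpoint[of 0] h(1) by (simp add: picard_step_def)
  ultimately show ?thesis using h(1) by blast
qed

definition parallel_velocity :: "christoffel \<Rightarrow> real^2 \<Rightarrow> real^2 \<Rightarrow> real^2 \<Rightarrow> real^2" where
  "parallel_velocity Gam p w v = (\<chi> k. - (\<Sum>i\<in>UNIV. \<Sum>j\<in>UNIV. Gam k i j p * w $ i * v $ j))"

lemma parallel_velocity_uminus: "parallel_velocity Gam p w (-v) = - parallel_velocity Gam p w v"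
  by (simp add: parallel_velocity_def vec_eq_iff sum_negf)

lemma parallel_velocity_axis:
  "parallel_velocity Gam p (axis i 1) v $ k = - (\<Sum>j\<in>UNIV. Gam k i j p * v $ j)"
  using exhaust_2[of i] by (auto simp: parallel_velocity_def sum_2 axis_def)

lemma is_covD_continuous: "is_covD Gam \<Longrightarrow> continuous_on UNIV (Gam k i j)"
  unfolding is_covD_def
  using smooth_on_imp_differentiable_on differentiable_imp_continuous_on by blast

lemma regular_curve_has_vector_derivative:
  assumes "regular_smooth_curve I \<gamma>" "open I" "t \<in> I"
  shows "(\<gamma> has_vector_derivative vector_derivative \<gamma> (at t)) (at t)"
proof -
  have "\<gamma> differentiable_on I"
    using assms(1) smooth_on_imp_differentiable_on unfolding regular_smooth_curve_def by blast
  then show ?thesis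
    using assms(2,3) differentiable_on_eq_differentiable_at vector_derivative_works by blast
qed

lemma line_has_vector_derivative: "((\<lambda>t. p + t *\<^sub>R w) has_vector_derivative w) (at t)"
  by (auto intro!: derivative_eq_intros)

lemma regular_smooth_curve_line: "w \<noteq> 0 \<Longrightarrow> regular_smooth_curve I (\<lambda>t. p + t *\<^sub>R w)"
  unfolding regular_smooth_curve_def vector_derivative_at[OF line_has_vector_derivative]
  by (auto intro!: smooth_on_affine[where c=p and L="\<lambda>t. t *\<^sub>R w"] linear_scaleR_left)

(* Parallel transport along a straight line exists for a short time: the parallel field
   equation is a linear ODE with continuous coefficients. *)
lemma parallel_along_line_exists:
  assumes "is_covD Gam"
  shows "\<exists>h>0. \<exists>V. V 0 = v0 \<and> parallel_along Gam {-h<..<h} (\<lambda>t. p + t *\<^sub>R w) V"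
proof -
  define M where "M k j t = - (\<Sum>i\<in>UNIV. Gam k i j (p + t *\<^sub>R w) * w $ i)" for k j t
  have "continuous_on UNIV (M k j)" for k j
    unfolding M_def
    by (intro continuous_intros continuous_on_compose2[OF is_covD_continuous[OF assms]]) auto
  then obtain h V where "h > 0" "V 0 = v0"
    and V: "\<forall>t\<in>{-h<..<h}. (V has_vector_derivative linear_field M t (V t)) (at t)"
    using linear_ode_local_existence by blast
  moreover have "linear_field M t (V t) =
     (\<chi> k. - (\<Sum>i\<in>UNIV. \<Sum>j\<in>UNIV. Gam k i j (p + t *\<^sub>R w) * vector_derivative (\<lambda>t. p + t *\<^sub>R w) (at t) $ i * V t $ j))" for t
    by (simp add: linear_field_def M_def vector_derivative_at[OF line_has_vector_derivative]
        vec_eq_iff sum_2 algebra_simps)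
  ultimately show ?thesis unfolding parallel_along_def by auto
qed

(* First variation: if F is holonomy invariant, the derivative of F along any curve (line,
   vector) with initial data (p + t w, v) and initial velocity (w, -Gamma_p(w,v)) vanishes,
   because it agrees at 0 with the derivative along the true parallel field. *)
lemma holonomy_invariant_first_variation:
  assumes Gam: "is_covD Gam" and inv: "holonomy_invariant Gam F" and w: "w \<noteq> 0"
    and deriv: "\<And>V. V 0 = v \<Longrightarrow> (V has_vector_derivative parallel_velocity Gam p w v) (at 0) \<Longrightarrow>
                  ((\<lambda>t. F (p + t *\<^sub>R w) (V t)) has_real_derivative D) (at 0)"
  shows "D = 0"
proof -
  obtain h V where h: "h > 0" and V0: "V 0 = v" and par: "parallel_along Gam {-h<..<h} (\<lambda>t. p + t *\<^sub>R w) V"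
    using parallel_along_line_exists[OF Gam] by blast
  have "(0::real) \<in> {-h<..<h}" using h by simp
  then have "(V has_vector_derivative parallel_velocity Gam p w v) (at 0)"
    using bspec[OF par[unfolded parallel_along_def], of 0] V0
    unfolding parallel_velocity_def vector_derivative_at[OF line_has_vector_derivative] by simp
  then have dF: "((\<lambda>t. F (p + t *\<^sub>R w) (V t)) has_real_derivative D) (at 0)" using deriv V0 by blast
  have "F (p + t *\<^sub>R w) (V t) = F (p + 0 *\<^sub>R w) (V 0)" if "t \<in> {-h<..<h}" for t
    using inv par that h regular_smooth_curve_line[OF w]
    unfolding holonomy_invariant_def by (metis neg_less_0_iff_less)
  then have "((\<lambda>t. F (p + 0 *\<^sub>R w) (V 0)) has_real_derivative D) (at 0)"
    using has_field_derivative_transform_within_open[OF dF, of "{-h<..<h}"] h by auto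
  then show ?thesis using DERIV_const DERIV_unique by blast
qed

(* The covariant derivative with nabla E1 = nabla E2 = 0; its only nonzero Christoffel symbol
   is  Gamma^1_{12} = -1. *)
definition frame_connection :: christoffel where
  "frame_connection k i j p = (if k = 1 \<and> i = 1 \<and> j = 2 then -1 else 0)"

lemma E1_nth [simp]: "E1 p $ 1 = p $ 1" "E1 p $ 2 = 1" by (simp_all add: E1_def)
lemma E2_nth [simp]: "E2 p $ 1 = -1" "E2 p $ 2 = 0" by (simp_all add: E2_def)

lemma pd_E1: "pd (\<lambda>q. E1 q $ k) v p = (if k = 1 then v $ 1 else 0)"
proof (cases "k = 1")
  case True
  have "pd (\<lambda>q. E1 q $ k) v p = v $ 1"
    by (rule pd_affine[where c=0]) (auto simp: True bounded_linear.linear[OF bounded_linear_vec_nth])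
  then show ?thesis using True by simp
next
  case False
  then have "(\<lambda>q. E1 q $ k) = (\<lambda>_. 1)" using exhaust_2[of k] by auto
  then show ?thesis using False by (simp add: pd_const)
qed

lemma pd_E2: "pd (\<lambda>q. E2 q $ k) v p = 0"
proof -
  have "(\<lambda>q. E2 q $ k) = (\<lambda>_. E2 0 $ k)" by (auto simp: E2_def)
  then show ?thesis by (simp add: pd_const)
qed

lemma axis_nth_1: "axis (i::2) (1::real) $ 1 = (if i = 1 then 1 else 0)"
  by (auto simp: axis_def)

lemma covD_frame_connection_E1: "covD frame_connection X E1 = (\<lambda>p. 0)"
  by (rule ext, simp add: covD_def vec_eq_iff forall_2 sum_2 pd_E1 axis_nth_1 frame_connection_def)

lemma covD_frame_connection_E2: "covD frame_connection X E2 = (\<lambda>p. 0)"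
  by (rule ext, simp add: covD_def vec_eq_iff forall_2 sum_2 pd_E2 frame_connection_def)

lemma is_covD_frame_connection: "is_covD frame_connection"
proof -
  have "frame_connection k i j = (\<lambda>_. frame_connection k i j 0)" for k i j
    by (auto simp: frame_connection_def)
  then show ?thesis unfolding is_covD_def by (metis smooth_on_const)
qed

lemma frame_connection_unique:
  assumes "\<forall>X. covD Gam X E1 = (\<lambda>p. 0)" "\<forall>X. covD Gam X E2 = (\<lambda>p. 0)"
  shows "Gam = frame_connection"
proof (intro ext)
  fix k i j p
  have E1_parallel: "covD Gam (\<lambda>_. axis i 1) E1 p $ k = 0"
   and E2_parallel: "covD Gam (\<lambda>_. axis i 1) E2 p $ k = 0"
    using assms by simp_all
  have "(if k = 1 \<and> i = 1 then 1 else 0) + Gam k i 1 p * p $ 1 + Gam k i 2 p = 0"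
    using E1_parallel exhaust_2[of i] exhaust_2[of k] by (auto simp: covD_def sum_2 pd_E1 axis_def)
  moreover have "Gam k i 1 p = 0"
    using E2_parallel exhaust_2[of i] exhaust_2[of k] by (auto simp: covD_def sum_2 pd_E2 axis_def)
  ultimately show "Gam k i j p = frame_connection k i j p"
    using exhaust_2[of j] by (auto simp: frame_connection_def split: if_splits)
qed

(* [E1, E2] = d/dx, hence the torsion  T(E1,E2) = -[E1,E2] = -d/dx  of any connection
   making the frame parallel. *)
lemma lie_bracket_E1_E2: "lie_bracket E1 E2 = (\<lambda>p. vector [1, 0])"
  by (rule ext, simp add: lie_bracket_def vec_eq_iff forall_2 sum_2 pd_E1 pd_E2 axis_nth_1)

lemma torsion_E1_E2:
  assumes "\<forall>X. covD Gam X E1 = (\<lambda>p. 0)" "\<forall>X. covD Gam X E2 = (\<lambda>p. 0)"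
  shows "torsion Gam E1 E2 = (\<lambda>p. vector [-1, 0])"
  using assms by (auto simp: torsion_def lie_bracket_E1_E2 vec_eq_iff forall_2)

lemma constant_vector_field_nonzero: "(\<lambda>p::real^2. vector [-1, 0] :: real^2) \<noteq> (\<lambda>p. 0)"
  by (metis vector_2(1) zero_index zero_neq_neg_one)

lemma smooth_on_E1: "smooth_on UNIV E1"
  by (rule smooth_on_affine[where c="vector [0,1]" and L="\<lambda>p. vector [p $ 1, 0]"])
     (auto simp: E1_def vec_eq_iff forall_2 linear_iff)

lemma smooth_on_E2: "smooth_on UNIV E2"
  unfolding E2_def by (rule smooth_on_const)

definition coframe1 :: "real^2 \<Rightarrow> real" where
  "coframe1 v = v $ 2"

definition coframe2 :: "real^2 \<Rightarrow> real^2 \<Rightarrow> real" where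
  "coframe2 p v = - v $ 1 + p $ 1 * v $ 2"

lemma Fex_coframe: "Fex p v = sqrt (4 * (coframe1 v)^2 + 12 * (coframe2 p v)^2) - coframe1 v"
  by (simp add: Fex_def coframe1_def coframe2_def)

lemma coframe_constant_along_parallel:
  assumes \<gamma>: "regular_smooth_curve {a<..<b} \<gamma>" and V: "parallel_along frame_connection {a<..<b} \<gamma> V"
    and st: "s \<in> {a<..<b}" "t \<in> {a<..<b}"
  shows "coframe1 (V s) = coframe1 (V t) \<and> coframe2 (\<gamma> s) (V s) = coframe2 (\<gamma> t) (V t)"
proof -
  have "((\<lambda>t. coframe1 (V t)) has_real_derivative 0) (at r)
      \<and> ((\<lambda>t. coframe2 (\<gamma> t) (V t)) has_real_derivative 0) (at r)" if r: "r \<in> {a<..<b}" for r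
  proof -
    have "(V has_vector_derivative
      (\<chi> k. - (\<Sum>i\<in>UNIV. \<Sum>j\<in>UNIV. frame_connection k i j (\<gamma> r) * vector_derivative \<gamma> (at r) $ i * V r $ j))) (at r)"
      using V r unfolding parallel_along_def by blast
    note V' = has_vector_derivative_vec_nth[OF this]
    have V1: "((\<lambda>t. V t $ 1) has_real_derivative vector_derivative \<gamma> (at r) $ 1 * V r $ 2) (at r)"
      using V'[of 1] by (simp add: sum_2 frame_connection_def)
    have V2: "((\<lambda>t. V t $ 2) has_real_derivative 0) (at r)"
      using V'[of 2] by (simp add: sum_2 frame_connection_def)
    have \<gamma>1: "((\<lambda>t. \<gamma> t $ 1) has_real_derivative vector_derivative \<gamma> (at r) $ 1) (at r)"
      using has_vector_derivative_vec_nth[OF regular_curve_has_vector_derivative[OF \<gamma> _ r]] by simp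
    have "((\<lambda>t. coframe2 (\<gamma> t) (V t)) has_real_derivative 0) (at r)"
      unfolding coframe2_def by (rule derivative_eq_intros V1 V2 \<gamma>1 refl | simp)+
    then show ?thesis using V2 unfolding coframe1_def by simp
  qed
  then show ?thesis using has_field_derivative_zero_constant_interval st by blast
qed

lemma holonomy_invariant_coframe_function:
  "holonomy_invariant frame_connection (\<lambda>p v. \<Phi> (coframe1 v) (coframe2 p v))"
  unfolding holonomy_invariant_def
  using coframe_constant_along_parallel by (metis greaterThanLessThan_iff)

lemma holonomy_invariant_Fex: "holonomy_invariant frame_connection Fex"
  using holonomy_invariant_coframe_function[of "\<lambda>a c. sqrt (4 * a^2 + 12 * c^2) - a"]
  by (simp add: Fex_coframe[abs_def])

definition coframe_norm :: "real^2 \<Rightarrow> real^2 \<Rightarrow> real" where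
  "coframe_norm p v = sqrt (4 * (coframe1 v)^2 + 12 * (coframe2 p v)^2)"

(* alpha is positive on nonzero vectors, since the coframe is a basis of covectors. *)
lemma coframe_norm_pos: "v \<noteq> 0 \<Longrightarrow> 0 < coframe_norm p v"
proof -
  assume "v \<noteq> 0"
  then have "coframe1 v \<noteq> 0 \<or> coframe2 p v \<noteq> 0"
    by (auto simp: coframe1_def coframe2_def vec_eq_iff forall_2)
  then have "0 < 4 * (coframe1 v)^2 + 12 * (coframe2 p v)^2"
    by (auto simp: add_pos_nonneg add_nonneg_pos)
  then show ?thesis by (simp add: coframe_norm_def)
qed

lemma coframe1_uminus [simp]: "coframe1 (-v) = - coframe1 v"
  by (simp add: coframe1_def)

lemma coframe2_uminus [simp]: "coframe2 p (-v) = - coframe2 p v"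
  by (simp add: coframe2_def)

(* ... so alpha is reversible, while the term E^1 of F is odd: this asymmetry drives the rigidity. *)
lemma coframe_norm_uminus [simp]: "coframe_norm p (-v) = coframe_norm p v"
  by (simp add: coframe_norm_def)

lemma Fex_line_derivative:
  assumes v: "v \<noteq> 0" and V: "V 0 = v" "(V has_vector_derivative u) (at 0)"
  shows "((\<lambda>t. Fex (p + t *\<^sub>R w) (V t)) has_real_derivative
     (4 * coframe1 v * coframe1 u + 12 * coframe2 p v * (coframe2 p u + w $ 1 * v $ 2)) / coframe_norm p v
     - coframe1 u) (at 0)"
proof -
  define N where "N = 4 * coframe1 v * coframe1 u + 12 * coframe2 p v * (coframe2 p u + w $ 1 * v $ 2)"
  define q where "q t = 4 * (coframe1 (V t))^2 + 12 * (coframe2 (p + t *\<^sub>R w) (V t))^2" for t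
  have V1: "((\<lambda>t. V t $ 1) has_real_derivative u $ 1) (at 0)"
   and V2: "((\<lambda>t. V t $ 2) has_real_derivative u $ 2) (at 0)"
    by (rule has_vector_derivative_vec_nth[OF V(2)])+
  have \<gamma>1: "((\<lambda>t. (p + t *\<^sub>R w) $ 1) has_real_derivative w $ 1) (at 0)"
    by (rule has_vector_derivative_vec_nth[OF line_has_vector_derivative])
  have c1: "((\<lambda>t. coframe1 (V t)) has_real_derivative coframe1 u) (at 0)"
    using V2 by (simp add: coframe1_def)
  have c2: "((\<lambda>t. coframe2 (p + t *\<^sub>R w) (V t)) has_real_derivative coframe2 p u + w $ 1 * v $ 2) (at 0)"
    using DERIV_add[OF DERIV_minus[OF V1] DERIV_mult[OF \<gamma>1 V2]]
    by (simp add: coframe2_def V(1) algebra_simps)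
  have dq: "(q has_real_derivative 2 * N) (at 0)"
    using DERIV_add[OF DERIV_cmult[OF DERIV_power[OF c1, of 2], of 4] DERIV_cmult[OF DERIV_power[OF c2, of 2], of 12]]
    unfolding q_def[abs_def] N_def by (simp add: V(1) algebra_simps)
  have q0: "sqrt (q 0) = coframe_norm p v" by (simp add: q_def coframe_norm_def V(1))
  have "0 < q 0" using coframe_norm_pos[OF v, of p] by (simp add: q_def coframe_norm_def V(1))
  moreover have "inverse (sqrt (q 0)) / 2 * (2 * N) = N / coframe_norm p v"
    unfolding q0 by (simp add: field_simps)
  ultimately have "((\<lambda>t. sqrt (q t)) has_real_derivative N / coframe_norm p v) (at 0)"
    using DERIV_chain2[OF DERIV_real_sqrt dq] by metis
  note dF = DERIV_diff[OF this c1]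
  have "(\<lambda>t. Fex (p + t *\<^sub>R w) (V t)) = (\<lambda>t. sqrt (q t) - coframe1 (V t))"
    by (simp add: Fex_coframe q_def)
  then show ?thesis using dF by (simp only: N_def)
qed

(* Rigidity: comparing the first variation for v and -v (F(v) and F(-v) differ only in the sign
   of E^1) forces  E^1(Gamma(w,v)) = 0  and, where E^2(v) \<noteq> 0, a condition on E^2(Gamma(w,v)). *)
lemma Fex_rigidity:
  assumes Gam: "is_covD Gam" and inv: "holonomy_invariant Gam Fex" and w: "w \<noteq> 0" and v: "v \<noteq> 0"
  shows "coframe1 (parallel_velocity Gam p w v) = 0
    \<and> (coframe2 p v \<noteq> 0 \<longrightarrow> coframe2 p (parallel_velocity Gam p w v) + w $ 1 * v $ 2 = 0)"
proof -
  have variation: "(4 * coframe1 v' * coframe1 (parallel_velocity Gam p w v')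
      + 12 * coframe2 p v' * (coframe2 p (parallel_velocity Gam p w v') + w $ 1 * v' $ 2))
      = coframe_norm p v' * coframe1 (parallel_velocity Gam p w v')" if v': "v' \<noteq> 0" for v'
  proof -
    have "(4 * coframe1 v' * coframe1 (parallel_velocity Gam p w v')
      + 12 * coframe2 p v' * (coframe2 p (parallel_velocity Gam p w v') + w $ 1 * v' $ 2))
      / coframe_norm p v' - coframe1 (parallel_velocity Gam p w v') = 0"
      by (rule holonomy_invariant_first_variation[OF Gam inv w]) (rule Fex_line_derivative[OF v'])
    then show ?thesis using coframe_norm_pos[OF v', of p] by (simp add: field_simps)
  qed
  define u where "u = parallel_velocity Gam p w v"
  define N where "N = 4 * coframe1 v * coframe1 u + 12 * coframe2 p v * (coframe2 p u + w $ 1 * v $ 2)"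
  have "N = coframe_norm p v * coframe1 u"
    using variation[OF v] by (simp add: N_def u_def)
  moreover have "N = - (coframe_norm p v * coframe1 u)"
    using variation[of "-v"] v by (simp add: N_def u_def parallel_velocity_uminus algebra_simps)
  ultimately have "coframe1 u = 0" "N = 0" using coframe_norm_pos[OF v, of p] by auto
  then show ?thesis by (auto simp: N_def u_def[symmetric])
qed

lemma holonomy_invariant_Fex_unique:
  assumes Gam: "is_covD Gam" and inv: "holonomy_invariant Gam Fex"
  shows "Gam = frame_connection"
proof (intro ext)
  fix k i j :: 2 and p :: "real^2"
  have w: "axis i (1::real) \<noteq> 0" by simp
  note rigid = Fex_rigidity[OF Gam inv w]
  (* v = d/dx_l:  E^1(Gamma(d/dx_i, d/dx_l)) = 0 *)
  have G2: "Gam 2 i l p = 0" for l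
  proof -
    have "axis l (1::real) \<noteq> 0" by simp
    from conjunct1[OF rigid[OF this, of p]]
    have "- (\<Sum>j'\<in>UNIV. Gam 2 i j' p * axis l 1 $ j') = 0"
      by (simp only: coframe1_def parallel_velocity_axis)
    then show ?thesis using exhaust_2[of l] by (auto simp: sum_2 axis_def)
  qed
  (* v = -d/dx and v = (x - 1) d/dx + d/dy, both with E^2(v) = 1 *)
  moreover have G11: "Gam 1 i 1 p = 0"
  proof -
    have "vector [-1, 0] \<noteq> (0::real^2)" by (simp add: vec_eq_iff forall_2)
    from conjunct2[OF rigid[OF this, of p]] show ?thesis
      by (simp add: coframe1_def coframe2_def parallel_velocity_axis sum_2 G2)
  qed
  moreover have "Gam 1 i 2 p = - axis i 1 $ 1"
  proof -
    have "vector [p $ 1 - 1, 1] \<noteq> (0::real^2)" by (simp add: vec_eq_iff forall_2)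
    from conjunct2[OF rigid[OF this, of p]] show ?thesis
      using G11 by (simp add: coframe1_def coframe2_def parallel_velocity_axis sum_2 G2 algebra_simps)
  qed
  ultimately show "Gam k i j p = frame_connection k i j p"
    using exhaust_2[of k] exhaust_2[of j] by (auto simp: frame_connection_def axis_def)
qed

lemma not_torsion_free_invariant:
  assumes "is_covD Gam" "holonomy_invariant Gam Fex"
  shows "\<not> torsion_free Gam"
proof
  assume "torsion_free Gam"
  then have "torsion frame_connection E1 E2 = (\<lambda>p. 0)"
    using holonomy_invariant_Fex_unique[OF assms] smooth_on_E1 smooth_on_E2
    unfolding torsion_free_def by blast
  moreover have "torsion frame_connection E1 E2 = (\<lambda>p. vector [-1, 0])"
    by (rule torsion_E1_E2) (simp_all add: covD_frame_connection_E1 covD_frame_connection_E2)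
  ultimately show False using constant_vector_field_nonzero by simp
qed

theorem mainTheorem8:
  shows "(\<exists>Gam. is_covD Gam \<and> (\<forall>X. covD Gam X E1 = (\<lambda>p. 0)) \<and> (\<forall>X. covD Gam X E2 = (\<lambda>p. 0)))
    \<and> (\<forall>Gam. is_covD Gam \<and> (\<forall>X. covD Gam X E1 = (\<lambda>p. 0)) \<and> (\<forall>X. covD Gam X E2 = (\<lambda>p. 0)) \<longrightarrow>
          holonomy_invariant Gam Fex
        \<and> generalized_Berwald Fex
        \<and> (\<forall>Gam'. is_covD Gam' \<and> holonomy_invariant Gam' Fex \<longrightarrow> Gam' = Gam)
        \<and> torsion Gam E1 E2 = (\<lambda>p. vector [-1, 0])
        \<and> torsion Gam E1 E2 \<noteq> (\<lambda>p. 0))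
    \<and> \<not> (\<exists>Gam. is_covD Gam \<and> torsion_free Gam \<and> holonomy_invariant Gam Fex)
    \<and> \<not> Berwald Fex"
proof -
  have frame_parallel: "is_covD frame_connection \<and> (\<forall>X. covD frame_connection X E1 = (\<lambda>p. 0))
      \<and> (\<forall>X. covD frame_connection X E2 = (\<lambda>p. 0))"
    using is_covD_frame_connection covD_frame_connection_E1 covD_frame_connection_E2 by blast
  have generalized: "generalized_Berwald Fex"
    unfolding generalized_Berwald_def using is_covD_frame_connection holonomy_invariant_Fex by blast
  have "holonomy_invariant Gam Fex
        \<and> (\<forall>Gam'. is_covD Gam' \<and> holonomy_invariant Gam' Fex \<longrightarrow> Gam' = Gam)
        \<and> torsion Gam E1 E2 = (\<lambda>p. vector [-1, 0])"
    if "(\<forall>X. covD Gam X E1 = (\<lambda>p. 0))" "(\<forall>X. covD Gam X E2 = (\<lambda>p. 0))" for Gam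
    using frame_connection_unique[OF that] torsion_E1_E2[OF that] holonomy_invariant_Fex
      holonomy_invariant_Fex_unique by blast
  moreover have "\<not> (\<exists>Gam. is_covD Gam \<and> torsion_free Gam \<and> holonomy_invariant Gam Fex)"
    using not_torsion_free_invariant by blast
  ultimately show ?thesis
    using frame_parallel generalized constant_vector_field_nonzero unfolding Berwald_def by metis
qed

end
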